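(* Let $G$ be a graph on $d+2$ vertices, $k>1$, and $\overline{B_G} = \frac{1}{k^2-1}(B_G(k) + J) = \frac{1}{k^2-1} I - A_G$. Then $G$ has a spherical representation in $\mathbb{R}^d$ with distance ratio $k$ if and only if all of the following hold: (i) $w^T \overline{B_G} w \geq 0$ for all $w \in \mathbf{1}^{\perp}$; (ii) there exist a nonzero $w \in \mathbf{1}^{\perp}$ and a real $\gamma$ with $\overline{B_G} w = \gamma \mathbf{1}$; (iii) $\det(\overline{B_G}) = 0$; (iv) there exists $r_0 \in \mathbb{R}$ such that $rJ + \overline{B_G}$ is positive semidefinite for all $r \geq r_0$.
   Context: Graphs are finite and simple with vertices labeled $1,\dots,d+2$; $A_G$ is the adjacency matrix. A finite set $S\subset\mathbb{R}^d$ is a 2-distance set if $\{\|p-q\| : p,q\in S, p\neq q\}$ has exactly two elements $\alpha_1>\alpha_2$; its distance ratio is $k=\alpha_1/\alpha_2$; its associated graph has vertex set $S$ with $p,q$ adjacent iff $\|p-q\|=\alpha_1$. $G$ has a spherical representation in $\mathbb{R}^d$ with ratio $k$ if some 2-distance set in $\mathbb{R}^d$ with ratio $k$, lying on a $(d-1)$-dimensional sphere, has associated graph $G$. $B_G(k)$ is the matrix with $b_{ii}=0$, $b_{ij}=-1$ for non-adjacent $i\neq j$, $b_{ij}=-k^2$ for adjacent $i,j$. $J$ is the all-ones matrix, $\mathbf{1}$ the all-ones vector, $\mathbf{1}^\perp$ its orthogonal complement. *)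

theory Defs
  imports "HOL-Analysis.Analysis"
begin

definition simple_graph :: "('v \<Rightarrow> 'v \<Rightarrow> bool) \<Rightarrow> bool" where
  "simple_graph E \<longleftrightarrow> (\<forall>x y. E x y \<longleftrightarrow> E y x) \<and> (\<forall>x. \<not> E x x)"

definition adj_matrix :: "('v::finite \<Rightarrow> 'v \<Rightarrow> bool) \<Rightarrow> real^'v^'v" where
  "adj_matrix E = (\<chi> i j. if E i j then 1 else 0)"

definition J_mat :: "real^'v::finite^'v" where
  "J_mat = (\<chi> i j. 1)"

definition B_mat :: "('v::finite \<Rightarrow> 'v \<Rightarrow> bool) \<Rightarrow> real \<Rightarrow> real^'v^'v" where
  "B_mat E k = (\<chi> i j. if i = j then 0 else if E i j then - (k^2) else -1)"

definition Bbar_mat :: "('v::finite \<Rightarrow> 'v \<Rightarrow> bool) \<Rightarrow> real \<Rightarrow> real^'v^'v" where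
  "Bbar_mat E k = (1 / (k^2 - 1)) *\<^sub>R (B_mat E k + J_mat)"

definition psd :: "real^'v::finite^'v \<Rightarrow> bool" where
  "psd M \<longleftrightarrow> transpose M = M \<and> (\<forall>x. 0 \<le> x \<bullet> (M *v x))"

definition spherical_representation ::
  "('v \<Rightarrow> 'v \<Rightarrow> bool) \<Rightarrow> real \<Rightarrow> ('v \<Rightarrow> real^'n::finite) \<Rightarrow> bool" where
  "spherical_representation E k p \<longleftrightarrow>
     inj p \<and>
     (\<exists>a1 a2. {dist (p x) (p y) | x y. x \<noteq> y} = {a1, a2} \<and> a1 > a2 \<and> a1 / a2 = k \<and>
        (\<forall>x y. x \<noteq> y \<longrightarrow> (E x y \<longleftrightarrow> dist (p x) (p y) = a1))) \<and>
     (\<exists>c r. r > 0 \<and> (\<forall>x. dist (p x) c = r))"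

end

theory Submission
  imports Defs
begin

text \<open>
Centring a spherical representation at the origin and rescaling it so that the shorter distance
becomes \<open>sqrt (2 / (k\<^sup>2 - 1))\<close> turns \<open>Bbar_mat E k\<close> into the Gram matrix of the points plus a
multiple of \<open>J\<close>; conversely, such a decomposition by vectors in \<open>real^'n\<close> is a spherical
representation as soon as the graph has an edge and a non-edge. It remains to see when a symmetric
\<open>B\<close> is a Gram matrix of \<open>d\<close>-dimensional vectors \<open>q i\<close> plus a multiple of \<open>J\<close>. If it is, \<open>B\<close>
is positive semidefinite on the hyperplane orthogonal to \<open>1\<close>, and any vector annihilating the
\<open>d + 2\<close> vectors \<open>(1, q i)\<close> of \<open>\<real> \<times> \<real>\<^sup>d\<close> lies in the kernel of \<open>B\<close>. Conversely, (iv) provides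
\<open>c\<close> and \<open>u\<close> with \<open>u \<bullet> 1 = 1\<close> such that \<open>M = B + c J\<close> maps \<open>u\<close> to \<open>0\<close>, and then (i) makes \<open>M\<close>
positive semidefinite. The vector of (ii) is a second kernel vector of \<open>M\<close>, so a Gram factorisation
of \<open>M\<close>, obtained by Cholesky elimination, spans at most \<open>d\<close> dimensions and embeds isometrically
into \<open>real^'n\<close>. That kernel vector also rules out the empty and the complete graph.
\<close>

section \<open>Gram matrices\<close>

lemma transpose_add: "transpose (A + B) = transpose A + transpose (B :: 'a::semiring_1^'n^'m)"
  by (simp add: transpose_def vec_eq_iff)

lemma transpose_eq_entry:
  assumes "transpose G = G"
  shows "G$i$j = G$j$i"
proof -
  have "transpose G $ j $ i = G$i$j"
    by (simp add: transpose_def)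
  with assms show ?thesis
    by simp
qed

lemma det_eq_0_if_kernel:
  fixes A :: "real^'n::finite^'n"
  assumes "A *v x = 0" "x \<noteq> 0"
  shows "det A = 0"
proof -
  have "rank A \<noteq> CARD('n)"
    using assms matrix_nonfull_linear_equations_eq by blast
  moreover have "rank A \<le> CARD('n)"
    using rank_bound[of A] by simp
  ultimately show ?thesis
    by (simp add: det_eq_0_rank)
qed

definition gram_matrix :: "('v::finite \<Rightarrow> 'a::real_inner) \<Rightarrow> real^'v^'v" where
  "gram_matrix q = (\<chi> i j. q i \<bullet> q j)"

lemma transpose_gram_matrix: "transpose (gram_matrix q) = gram_matrix q"
  by (simp add: gram_matrix_def transpose_def inner_commute)

lemma gram_matrix_vector_mult:
  "gram_matrix q *v x = (\<chi> i. q i \<bullet> (\<Sum>j\<in>UNIV. x$j *\<^sub>R q j))"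
  by (simp add: gram_matrix_def matrix_vector_mult_def inner_sum_right vec_eq_iff mult.commute)

lemma gram_matrix_quadratic_form:
  "x \<bullet> (gram_matrix q *v x) = (norm (\<Sum>i\<in>UNIV. x$i *\<^sub>R q i))\<^sup>2"
  by (simp add: gram_matrix_vector_mult inner_vec_def power2_norm_eq_inner inner_sum_left)

lemma gram_matrix_kernel:
  "gram_matrix q *v x = 0 \<longleftrightarrow> (\<Sum>i\<in>UNIV. x$i *\<^sub>R q i) = 0"
proof
  assume "gram_matrix q *v x = 0"
  then have "(norm (\<Sum>i\<in>UNIV. x$i *\<^sub>R q i))\<^sup>2 = 0"
    using gram_matrix_quadratic_form[of x q] by simp
  then show "(\<Sum>i\<in>UNIV. x$i *\<^sub>R q i) = 0"
    by simp
qed (simp add: gram_matrix_vector_mult vec_eq_iff)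

lemma J_mat_vector_mult: "J_mat *v x = (x \<bullet> vec 1) *\<^sub>R (vec 1 :: real^'v::finite)"
  by (simp add: vec_eq_iff J_mat_def matrix_vector_mult_def inner_vec_def)

lemma transpose_J_mat: "transpose (J_mat :: real^'v::finite^'v) = J_mat"
  by (simp add: J_mat_def transpose_def vec_eq_iff)

lemma inner_matrix_vector_symmetric:
  "transpose M = M \<Longrightarrow> x \<bullet> ((M::real^'n::finite^'n) *v y) = (M *v x) \<bullet> y"
  by (metis dot_lmul_matrix vector_transpose_matrix)

section \<open>Positive semidefinite matrices are Gram matrices\<close>

definition psd_on :: "'v set \<Rightarrow> real^'v::finite^'v \<Rightarrow> bool" where
  "psd_on I G \<longleftrightarrow> (\<forall>x. (\<forall>i. i \<notin> I \<longrightarrow> x$i = 0) \<longrightarrow> 0 \<le> x \<bullet> (G *v x))"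

text \<open>With a zero pivot this is \<open>G\<close> itself, because \<open>x / 0 = 0\<close>.\<close>

definition schur_complement :: "real^'v::finite^'v \<Rightarrow> 'v \<Rightarrow> real^'v^'v" where
  "schur_complement G a = (\<chi> i j. G$i$j - G$i$a * G$a$j / G$a$a)"

lemma psd_iff_psd_on_UNIV: "psd G \<longleftrightarrow> transpose G = G \<and> psd_on UNIV G"
  by (simp add: psd_def psd_on_def)

lemma psd_onD:
  "psd_on I G \<Longrightarrow> (\<And>i. i \<notin> I \<Longrightarrow> x$i = 0) \<Longrightarrow> 0 \<le> x \<bullet> (G *v x)"
  unfolding psd_on_def by blast

lemma psd_on_diag_nonneg:
  assumes "psd_on I G" "a \<in> I"
  shows "0 \<le> G$a$a"
proof -
  have "0 \<le> axis a 1 \<bullet> (G *v axis a 1)"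
    by (rule psd_onD[OF assms(1)]) (use assms(2) in \<open>auto simp: axis_def\<close>)
  then show ?thesis
    by (simp add: inner_axis' matrix_vector_mult_basis column_def)
qed

lemma quadratic_form_add_axis:
  fixes G :: "real^'v::finite^'v"
  assumes "transpose G = G"
  shows "(x + t *\<^sub>R axis a 1) \<bullet> (G *v (x + t *\<^sub>R axis a 1)) =
     x \<bullet> (G *v x) + 2 * t * (G *v x)$a + t\<^sup>2 * G$a$a"
proof -
  have "x \<bullet> (G *v axis a 1) = (G *v x)$a"
    using inner_matrix_vector_symmetric[OF assms] by (simp add: inner_axis)
  then show ?thesis
    by (simp add: matrix_vector_right_distrib matrix_vector_mult_scaleR inner_add_left
        inner_add_right inner_axis' inner_axis matrix_vector_mult_basis column_def
        power2_eq_square algebra_simps)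
qed

lemma psd_on_zero_diag:
  assumes sym: "transpose G = G" and psd: "psd_on I G"
    and "a \<in> I" "j \<in> I" "G$a$a = 0"
  shows "G$a$j = 0"
proof (rule ccontr)
  assume nz: "G$a$j \<noteq> 0"
  have "(G *v axis j 1)$a = G$a$j"
    by (simp add: matrix_vector_mult_basis column_def transpose_eq_entry[OF sym])
  have "0 \<le> (axis j 1 + t *\<^sub>R axis a 1) \<bullet> (G *v (axis j 1 + t *\<^sub>R axis a 1))" for t
    by (rule psd_onD[OF psd]) (use \<open>a \<in> I\<close> \<open>j \<in> I\<close> in \<open>auto simp: axis_def\<close>)
  then have line: "0 \<le> G$j$j + 2 * t * G$a$j" for t
    using \<open>G$a$a = 0\<close> \<open>(G *v axis j 1)$a = G$a$j\<close>
    by (simp add: quadratic_form_add_axis[OF sym] inner_axis' matrix_vector_mult_basis column_def)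
  define t where "t = - (\<bar>G$j$j\<bar> + 1) / (2 * G$a$j)"
  then have "2 * t * G$a$j = - (\<bar>G$j$j\<bar> + 1)"
    using nz by simp
  then show False
    using line[of t] abs_ge_self[of "G$j$j"] by linarith
qed

lemma schur_complement_quadratic_form:
  fixes G :: "real^'v::finite^'v"
  assumes "transpose G = G"
  shows "x \<bullet> (schur_complement G a *v x) = x \<bullet> (G *v x) - ((G *v x)$a)\<^sup>2 / G$a$a"
proof -
  have "schur_complement G a *v x = G *v x - ((G *v x)$a / G$a$a) *\<^sub>R (\<chi> i. G$i$a)"
    by (simp add: schur_complement_def matrix_vector_mult_def vec_eq_iff sum_subtractf
        sum_divide_distrib sum_distrib_left algebra_simps)
  moreover have "x \<bullet> (\<chi> i. G$i$a) = (G *v x)$a"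
  proof -
    have "(G *v x)$a = (transpose G *v x)$a"
      using assms by simp
    then show ?thesis
      by (simp add: transpose_def matrix_vector_mult_def inner_vec_def mult.commute)
  qed
  ultimately show ?thesis
    by (simp add: inner_diff_right power2_eq_square)
qed

lemma psd_on_schur_complement:
  fixes G :: "real^'v::finite^'v"
  assumes sym: "transpose G = G" and psd: "psd_on (insert a I) G"
  shows "psd_on I (schur_complement G a)"
proof (cases "G$a$a = 0")
  case True
  then have "schur_complement G a = G"
    by (simp add: schur_complement_def vec_eq_iff)
  with psd show ?thesis
    unfolding psd_on_def by auto
next
  case False
  then have g: "G$a$a > 0"
    using psd_on_diag_nonneg[OF psd] by force
  show ?thesis
    unfolding psd_on_def
  proof (intro allI impI)
    fix x :: "real^'v" assume "\<forall>i. i \<notin> I \<longrightarrow> x$i = 0"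
    moreover define t where "t = - (G *v x)$a / G$a$a"
    ultimately have "0 \<le> (x + t *\<^sub>R axis a 1) \<bullet> (G *v (x + t *\<^sub>R axis a 1))"
      by (intro psd_onD[OF psd]) (auto simp: axis_def)
    also have "\<dots> = x \<bullet> (schur_complement G a *v x)"
      unfolding quadratic_form_add_axis[OF sym] schur_complement_quadratic_form[OF sym]
      using g by (simp add: t_def power2_eq_square field_simps)
    finally show "0 \<le> x \<bullet> (schur_complement G a *v x)" .
  qed
qed

lemma schur_complement_pivot_row:
  assumes "transpose G = G" "psd_on I G" "a \<in> I" "j \<in> I"
  shows "schur_complement G a $ a $ j = 0"
  using psd_on_zero_diag[OF assms] by (cases "G$a$a = 0") (simp_all add: schur_complement_def)

lemma transpose_schur_complement:
  assumes "transpose G = G"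
  shows "transpose (schur_complement G a) = schur_complement G a"
  using assms unfolding schur_complement_def transpose_def
  by (simp add: vec_eq_iff mult.commute)

lemma gram_factorization_insert:
  fixes G :: "real^'v::finite^'v" and q :: "'v \<Rightarrow> real^'v"
  assumes sym: "transpose G = G" and psd: "psd_on (insert a F) G" and "a \<notin> F"
    and q: "\<And>i j. i \<in> F \<Longrightarrow> j \<in> F \<Longrightarrow> q i \<bullet> q j = schur_complement G a $ i $ j"
    and q_supp: "\<And>i j. i \<in> F \<Longrightarrow> j \<notin> F \<Longrightarrow> q i $ j = 0"
  shows "\<exists>r::'v \<Rightarrow> real^'v. (\<forall>i\<in>insert a F. \<forall>j\<in>insert a F. r i \<bullet> r j = G$i$j) \<and>
    (\<forall>i\<in>insert a F. \<forall>j. j \<notin> insert a F \<longrightarrow> r i $ j = 0)"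
proof -
  define S where "S = schur_complement G a"
  define q' where "q' = q(a := 0)"
  have S_a: "S$a$l = 0" "S$l$a = 0" if "l \<in> insert a F" for l
    using schur_complement_pivot_row[OF sym psd insertI1 that]
      transpose_eq_entry[OF transpose_schur_complement[OF sym, of a], of l a]
    unfolding S_def by simp_all
  have q'_gram: "q' i \<bullet> q' j = S$i$j" if "i \<in> insert a F" "j \<in> insert a F" for i j
    using that by (cases "i = a"; cases "j = a") (simp_all add: q'_def q S_a flip: S_def)
  have q'_a: "q' i $ a = 0" if "i \<in> insert a F" for i
    using that q_supp \<open>a \<notin> F\<close> by (cases "i = a") (simp_all add: q'_def)
  define g where "g = G$a$a"
  have "0 \<le> g"
    using psd_on_diag_nonneg[OF psd] by (simp add: g_def)
  \<comment> \<open>One Cholesky step; for \<open>g = 0\<close> the second summand vanishes as \<open>x / 0 = 0\<close>.\<close>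
  define r where "r i = q' i + (G$i$a / sqrt g) *\<^sub>R axis a 1" for i
  show ?thesis
  proof (intro exI[of _ r] conjI ballI allI impI)
    fix i j assume i: "i \<in> insert a F" and j: "j \<in> insert a F"
    have "r i \<bullet> r j = S$i$j + G$i$a * G$j$a / g"
      using q'_gram[OF i j] q'_a[OF i] q'_a[OF j] \<open>0 \<le> g\<close>
      by (simp add: r_def inner_add_left inner_add_right inner_axis inner_axis' inner_commute)
    also have "\<dots> = G$i$j"
      using transpose_eq_entry[OF sym, of j a] by (simp add: S_def schur_complement_def g_def)
    finally show "r i \<bullet> r j = G$i$j" .
  next
    fix i j assume "i \<in> insert a F" "j \<notin> insert a F"
    then show "r i $ j = 0"
      using q_supp by (auto simp: r_def q'_def axis_def)
  qed
qed

lemma gram_factorization_on: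
  fixes G :: "real^'v::finite^'v"
  assumes "transpose G = G" "psd_on I G"
  shows "\<exists>q::'v \<Rightarrow> real^'v. (\<forall>i\<in>I. \<forall>j\<in>I. q i \<bullet> q j = G$i$j) \<and> (\<forall>i\<in>I. \<forall>j. j \<notin> I \<longrightarrow> q i $ j = 0)"
  using finite[of I] assms
proof (induction I arbitrary: G rule: finite_induct)
  case empty
  show ?case
    by simp
next
  case (insert a F)
  obtain q :: "'v \<Rightarrow> real^'v"
    where "\<And>i j. i \<in> F \<Longrightarrow> j \<in> F \<Longrightarrow> q i \<bullet> q j = schur_complement G a $ i $ j"
      and "\<And>i j. i \<in> F \<Longrightarrow> j \<notin> F \<Longrightarrow> q i $ j = 0"
    using insert.IH[OF transpose_schur_complement psd_on_schur_complement] insert.prems by blast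
  then show ?case
    using gram_factorization_insert insert.prems \<open>a \<notin> F\<close> by blast
qed

lemma psd_gram_factorization:
  fixes M :: "real^'v::finite^'v"
  assumes "psd M"
  obtains q :: "'v \<Rightarrow> real^'v" where "M = gram_matrix q"
proof -
  obtain q :: "'v \<Rightarrow> real^'v" where "\<forall>i j. q i \<bullet> q j = M$i$j"
    using gram_factorization_on[of M UNIV] assms by (auto simp: psd_iff_psd_on_UNIV)
  then have "M = gram_matrix q"
    by (simp add: gram_matrix_def vec_eq_iff)
  then show thesis
    by (rule that)
qed

lemma psd_kernel:
  fixes M :: "real^'v::finite^'v"
  assumes "psd M" "x \<bullet> (M *v x) = 0"
  shows "M *v x = 0"
proof -
  obtain q :: "'v \<Rightarrow> real^'v" where M: "M = gram_matrix q"
    using psd_gram_factorization[OF assms(1)] .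
  then have "(norm (\<Sum>i\<in>UNIV. x$i *\<^sub>R q i))\<^sup>2 = 0"
    using assms(2) by (simp add: gram_matrix_quadratic_form)
  then show ?thesis
    by (simp add: M gram_matrix_kernel)
qed

section \<open>Gram vectors in lower dimension\<close>

lemma linear_kernel_nontrivial:
  fixes f :: "'a::euclidean_space \<Rightarrow> 'b::euclidean_space"
  assumes "linear f" "DIM('b) < DIM('a)"
  obtains x where "x \<noteq> 0" "f x = 0"
proof -
  have "\<not> inj f"
  proof
    assume "inj f"
    then have "dim (range f) = dim (UNIV :: 'a set)"
      by (intro dim_image_eq[OF assms(1)]) (simp add: inj_on_subset)
    then have "DIM('a) \<le> DIM('b)"
      using dim_subset_UNIV[of "range f"] by (simp only: dim_UNIV)
    with assms(2) show False
      by simp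
  qed
  with linear_inj_iff_eq_0[OF assms(1)] that show thesis
    by blast
qed

lemma dim_range_add_card_kernel_le:
  fixes f :: "'a::euclidean_space \<Rightarrow> 'b::euclidean_space"
  assumes "linear f" "independent K" "\<And>x. x \<in> K \<Longrightarrow> f x = 0"
  shows "dim (range f) + card K \<le> DIM('a)"
proof -
  obtain B where "K \<subseteq> B" "B \<subseteq> UNIV" "independent B" "UNIV \<subseteq> span B"
    by (rule maximal_independent_subset_extend[OF subset_UNIV assms(2)])
  have "dim (UNIV :: 'a set) = card B"
    by (rule dim_eq_card) (use \<open>UNIV \<subseteq> span B\<close> \<open>independent B\<close> in auto)
  then have B: "finite B" "card B = DIM('a)"
    using independent_bound_general[OF \<open>independent B\<close>] by simp_all
  have "range f = span (f ` B)"
    using linear_span_image[OF assms(1), of B] \<open>UNIV \<subseteq> span B\<close> by auto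
  also have "\<dots> \<subseteq> span (insert 0 (f ` (B - K)))"
    using assms(3) by (intro span_mono) auto
  finally have "dim (range f) \<le> card (f ` (B - K))"
    using B by (intro dim_le_card) auto
  also have "\<dots> \<le> card (B - K)"
    using B by (intro card_image_le) simp
  also have "\<dots> = card B - card K"
    using B \<open>K \<subseteq> B\<close> by (simp add: card_Diff_subset finite_subset)
  finally have "dim (range f) \<le> card B - card K" .
  moreover have "card K \<le> card B"
    using B \<open>K \<subseteq> B\<close> by (intro card_mono)
  ultimately show ?thesis
    using B by linarith
qed

lemma inner_eq_if_norm_preserving:
  fixes f :: "'a::real_inner \<Rightarrow> 'b::real_inner"
  assumes "linear f" "subspace S" "\<And>x. x \<in> S \<Longrightarrow> norm (f x) = norm x" "x \<in> S" "y \<in> S"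
  shows "f x \<bullet> f y = x \<bullet> y"
proof -
  have polar: "u \<bullet> v = ((norm u)\<^sup>2 + (norm v)\<^sup>2 - (norm (u - v))\<^sup>2) / 2" for u v :: "'c::real_inner"
    by (simp add: power2_norm_eq_inner inner_diff_left inner_diff_right inner_commute)
  have "f x - f y = f (x - y)"
    using linear_diff[OF assms(1)] by simp
  moreover have "x - y \<in> S"
    using assms(2,4,5) by (rule subspace_diff)
  ultimately show ?thesis
    using polar[of "f x" "f y"] polar[of x y] assms(3-5) by simp
qed

lemma gram_matrix_lower_dimension:
  fixes q :: "'v::finite \<Rightarrow> 'a::euclidean_space" and K :: "(real^'v) set"
  assumes "independent K" "\<And>x. x \<in> K \<Longrightarrow> gram_matrix q *v x = 0"
    and "CARD('v) \<le> DIM('b) + card K"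
  obtains p :: "'v \<Rightarrow> 'b::euclidean_space" where "gram_matrix p = gram_matrix q"
proof -
  define L where "L x = (\<Sum>i\<in>UNIV. x$i *\<^sub>R q i)" for x :: "real^'v"
  have "linear L"
    by (rule linearI) (simp_all add: L_def scaleR_add_left sum.distrib scaleR_sum_right)
  moreover have "L x = 0" if "x \<in> K" for x
    using assms(2)[OF that] by (simp add: L_def gram_matrix_kernel)
  ultimately have "dim (range L) + card K \<le> CARD('v)"
    using dim_range_add_card_kernel_le[OF _ assms(1)] by fastforce
  then have "dim (range L) \<le> dim (UNIV :: 'b set)"
    using assms(3) by simp
  then obtain f :: "'a \<Rightarrow> 'b" where f: "linear f" "\<And>x. x \<in> range L \<Longrightarrow> norm (f x) = norm x"
    using isometry_subset_subspace[OF linear_subspace_image[OF \<open>linear L\<close> subspace_UNIV] subspace_UNIV]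
    by metis
  have "q i = L (axis i 1)" for i
    by (simp add: L_def axis_def if_distrib[of "\<lambda>c. c *\<^sub>R _"] cong: if_cong)
  then have "f (q i) \<bullet> f (q j) = q i \<bullet> q j" for i j
    using inner_eq_if_norm_preserving[OF f(1) linear_subspace_image[OF \<open>linear L\<close> subspace_UNIV] f(2)]
    by (metis rangeI)
  then have "gram_matrix (f \<circ> q) = gram_matrix q"
    by (simp add: gram_matrix_def)
  then show thesis
    by (rule that)
qed

section \<open>Gram matrix plus a multiple of \<open>J\<close>\<close>

lemma quadratic_form_nonneg_if_nonneg_on_hyperplane:
  fixes M :: "real^'v::finite^'v"
  assumes sym: "transpose M = M" and "M *v u = 0" "u \<bullet> h \<noteq> 0"
    and nonneg: "\<And>y. y \<bullet> h = 0 \<Longrightarrow> 0 \<le> y \<bullet> (M *v y)"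
  shows "0 \<le> x \<bullet> (M *v x)"
proof -
  define t where "t = (x \<bullet> h) / (u \<bullet> h)"
  define y where "y = x - t *\<^sub>R u"
  have "y \<bullet> h = 0"
    using \<open>u \<bullet> h \<noteq> 0\<close> by (simp add: y_def t_def inner_diff_left)
  have My: "M *v y = M *v x"
    using \<open>M *v u = 0\<close> by (simp add: y_def matrix_vector_mult_diff_distrib matrix_vector_mult_scaleR)
  have "u \<bullet> (M *v y) = 0"
    using inner_matrix_vector_symmetric[OF sym, of u y] \<open>M *v u = 0\<close> by simp
  have "x \<bullet> (M *v x) = (y + t *\<^sub>R u) \<bullet> (M *v y)"
    unfolding My by (simp add: y_def)
  also have "\<dots> = y \<bullet> (M *v y)"
    using \<open>u \<bullet> (M *v y) = 0\<close> by (simp add: inner_add_left)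
  also have "\<dots> \<ge> 0"
    using nonneg[OF \<open>y \<bullet> h = 0\<close>] .
  finally show ?thesis .
qed

lemma symmetric_range_kernel_decomposition:
  fixes B :: "real^'v::finite^'v"
  assumes sym: "transpose B = B"
  obtains v z where "x = B *v v + z" "B *v z = 0" "z \<bullet> (B *v v) = 0"
proof -
  obtain y z where y: "y \<in> span (range ((*v) B))"
    and z: "\<And>v. v \<in> span (range ((*v) B)) \<Longrightarrow> orthogonal z v" and "x = y + z"
    by (rule orthogonal_subspace_decomp_exists[of "range ((*v) B)" x]) blast
  have range_B: "span (range ((*v) B)) = range ((*v) B)"
    using linear_span_image[OF matrix_vector_mul_linear[of B], of UNIV] by simp
  then obtain v where "y = B *v v"
    using y by (metis imageE)
  have "orthogonal z (B *v (B *v z))"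
    by (rule z) (simp add: range_B)
  then have "(B *v z) \<bullet> (B *v z) = 0"
    using inner_matrix_vector_symmetric[OF sym, of z "B *v z"] by (simp add: orthogonal_def)
  moreover have "z \<bullet> (B *v v) = 0"
    using z[OF y] \<open>y = B *v v\<close> by (simp add: orthogonal_def)
  ultimately show thesis
    using that \<open>x = y + z\<close> \<open>y = B *v v\<close> by simp
qed

lemma constant_image_vector_exists:
  fixes B :: "real^'v::finite^'v"
  assumes sym: "transpose B = B" and psd: "psd (r *\<^sub>R J_mat + B)"
  obtains u c where "B *v u = c *\<^sub>R vec 1" "u \<bullet> vec 1 = 1"
proof -
  obtain v z where one: "vec 1 = B *v v + z" and Bz: "B *v z = 0" and "z \<bullet> (B *v v) = 0"
    by (rule symmetric_range_kernel_decomposition[OF sym])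
  show thesis
  proof (cases "z = 0")
    case False
    have "z \<bullet> vec 1 = z \<bullet> z"
      using \<open>z \<bullet> (B *v v) = 0\<close> by (simp only: one inner_add_right)
    with False show thesis
      using that[of "(1 / (z \<bullet> z)) *\<^sub>R z" 0] Bz by (simp add: matrix_vector_mult_scaleR)
  next
    case True
    with one have v: "B *v v = vec 1"
      by simp
    define t where "t = v \<bullet> vec 1"
    have "t \<noteq> 0"
    proof
      assume "t = 0"
      then have Nv: "(r *\<^sub>R J_mat + B) *v v = vec 1"
        using v by (simp add: t_def matrix_vector_mult_add_rdistrib J_mat_vector_mult
            scaleR_matrix_vector_assoc[symmetric])
      then have "v \<bullet> ((r *\<^sub>R J_mat + B) *v v) = 0"
        using \<open>t = 0\<close> by (simp add: t_def)
      then have "(r *\<^sub>R J_mat + B) *v v = 0"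
        by (rule psd_kernel[OF psd])
      with Nv show False
        by (simp add: vec_eq_iff)
    qed
    then show thesis
      using that[of "(1 / t) *\<^sub>R v" "1 / t"] v by (simp add: t_def matrix_vector_mult_scaleR)
  qed
qed

definition spherical_conditions :: "real^'v::finite^'v \<Rightarrow> bool" where
  "spherical_conditions B \<longleftrightarrow>
    (\<forall>w. w \<bullet> vec 1 = 0 \<longrightarrow> 0 \<le> w \<bullet> (B *v w)) \<and>
    (\<exists>w \<gamma>. w \<noteq> 0 \<and> w \<bullet> vec 1 = 0 \<and> B *v w = \<gamma> *\<^sub>R vec 1) \<and>
    det B = 0 \<and>
    (\<exists>r0. \<forall>r \<ge> r0. psd (r *\<^sub>R J_mat + B))"

lemma spherical_conditions_if_gram_plus_J:
  fixes q :: "'v::finite \<Rightarrow> 'a::euclidean_space"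
  assumes B: "B = gram_matrix q + \<rho> *\<^sub>R J_mat" and dim: "DIM('a) + 2 \<le> CARD('v)"
  shows "spherical_conditions B"
  unfolding spherical_conditions_def
proof (intro conjI)
  define L where "L x = (\<Sum>i\<in>UNIV. x$i *\<^sub>R q i)" for x :: "real^'v"
  have Bx: "B *v x = gram_matrix q *v x + (\<rho> * (x \<bullet> vec 1)) *\<^sub>R vec 1" for x
    by (simp add: B matrix_vector_mult_add_rdistrib scaleR_matrix_vector_assoc[symmetric]
        J_mat_vector_mult)
  have quad: "x \<bullet> (B *v x) = (norm (L x))\<^sup>2 + \<rho> * (x \<bullet> vec 1)\<^sup>2" for x
    by (simp add: Bx inner_add_right gram_matrix_quadratic_form L_def power2_eq_square)
  show "\<forall>w. w \<bullet> vec 1 = 0 \<longrightarrow> 0 \<le> w \<bullet> (B *v w)"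
    by (simp add: quad)
  show "\<exists>r0. \<forall>r \<ge> r0. psd (r *\<^sub>R J_mat + B)"
  proof (intro exI[of _ "- \<rho>"] allI impI)
    fix r assume "r \<ge> - \<rho>"
    have "x \<bullet> ((r *\<^sub>R J_mat + B) *v x) = (norm (L x))\<^sup>2 + (r + \<rho>) * (x \<bullet> vec 1)\<^sup>2" for x
      by (simp add: matrix_vector_mult_add_rdistrib scaleR_matrix_vector_assoc[symmetric]
          J_mat_vector_mult quad power2_eq_square algebra_simps)
    moreover have "transpose (r *\<^sub>R J_mat + B) = r *\<^sub>R J_mat + B"
      by (simp add: B transpose_add transpose_scalar transpose_J_mat transpose_gram_matrix)
    ultimately show "psd (r *\<^sub>R J_mat + B)"
      using \<open>r \<ge> - \<rho>\<close> by (simp add: psd_def)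
  qed
  have "linear (\<lambda>x. (x \<bullet> vec 1, L x))"
    by (rule linearI) (simp_all add: L_def inner_add_left scaleR_add_left sum.distrib scaleR_sum_right)
  moreover have "DIM(real \<times> 'a) < DIM(real^'v)"
    using dim by simp
  ultimately obtain w where "w \<noteq> 0" "(w \<bullet> vec 1, L w) = (0, 0)"
    by (rule linear_kernel_nontrivial) (simp add: zero_prod_def)
  then have "w \<noteq> 0" "w \<bullet> vec 1 = 0" "B *v w = 0"
    by (auto simp: Bx L_def gram_matrix_kernel)
  then show "\<exists>w \<gamma>. w \<noteq> 0 \<and> w \<bullet> vec 1 = 0 \<and> B *v w = \<gamma> *\<^sub>R vec 1"
    by (intro exI[of _ w] exI[of _ 0]) simp
  show "det B = 0"
    by (rule det_eq_0_if_kernel) fact+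
qed

lemma psd_shift_if_spherical_conditions:
  fixes B :: "real^'v::finite^'v"
  assumes sym: "transpose B = B" and "spherical_conditions B"
  obtains c u w where "psd (c *\<^sub>R J_mat + B)" "(c *\<^sub>R J_mat + B) *v u = 0" "u \<bullet> vec 1 = 1"
    and "w \<noteq> 0" "w \<bullet> vec 1 = 0" "B *v w = 0"
proof -
  obtain r where nonneg: "\<forall>w. w \<bullet> vec 1 = 0 \<longrightarrow> 0 \<le> w \<bullet> (B *v w)"
    and ker: "\<exists>w \<gamma>. w \<noteq> 0 \<and> w \<bullet> vec 1 = 0 \<and> B *v w = \<gamma> *\<^sub>R vec 1"
    and psd: "psd (r *\<^sub>R J_mat + B)"
    using \<open>spherical_conditions B\<close> unfolding spherical_conditions_def by auto
  obtain u c where Bu: "B *v u = c *\<^sub>R vec 1" and u1: "u \<bullet> vec 1 = 1"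
    by (rule constant_image_vector_exists[OF sym psd])
  define M where "M = (- c) *\<^sub>R J_mat + B"
  have Mx: "M *v x = B *v x - (c * (x \<bullet> vec 1)) *\<^sub>R vec 1" for x
    by (simp add: M_def matrix_vector_mult_diff_rdistrib scaleR_matrix_vector_assoc[symmetric]
        J_mat_vector_mult)
  have Mu: "M *v u = 0"
    using Bu u1 by (simp add: Mx)
  have symM: "transpose M = M"
    by (simp only: M_def transpose_add transpose_scalar transpose_J_mat sym)
  have "0 \<le> x \<bullet> (M *v x)" for x
    by (rule quadratic_form_nonneg_if_nonneg_on_hyperplane[OF symM Mu, of "vec 1"])
      (use u1 nonneg in \<open>simp_all add: Mx inner_diff_right\<close>)
  with symM have psdM: "psd M"
    by (simp add: psd_def)
  obtain w \<gamma> where w: "w \<noteq> 0" "w \<bullet> vec 1 = 0" and Bw: "B *v w = \<gamma> *\<^sub>R vec 1"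
    using ker by blast
  have "M *v w = \<gamma> *\<^sub>R vec 1"
    using Bw w by (simp add: Mx)
  then have "w \<bullet> (M *v w) = 0"
    using w by simp
  then have "M *v w = 0"
    by (rule psd_kernel[OF psdM])
  then have "B *v w = 0"
    using w by (simp add: Mx)
  with psdM Mu u1 w show thesis
    by (intro that[of "- c"]) (simp_all add: M_def)
qed

lemma independent_pair:
  fixes u w :: "'a::real_inner"
  assumes "u \<bullet> h \<noteq> 0" "w \<bullet> h = 0" "w \<noteq> 0"
  shows "independent {u, w}"
proof -
  have "u \<notin> span {w}"
  proof
    assume "u \<in> span {w}"
    then obtain t where "u = t *\<^sub>R w"
      by (auto simp: span_singleton)
    with assms(1,2) show False
      by simp
  qed
  with assms(3) show ?thesis
    by (simp add: independent_insert)
qed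

lemma gram_plus_J_if_spherical_conditions:
  fixes B :: "real^'v::finite^'v"
  assumes sym: "transpose B = B" and dim: "CARD('v) \<le> DIM('a) + 2"
    and "spherical_conditions B"
  shows "(\<exists>w. w \<noteq> 0 \<and> w \<bullet> vec 1 = 0 \<and> B *v w = 0) \<and>
    (\<exists>(q :: 'v \<Rightarrow> 'a::euclidean_space) \<rho>. B = gram_matrix q + \<rho> *\<^sub>R J_mat)"
proof -
  obtain c u w where psdM: "psd (c *\<^sub>R J_mat + B)" and Mu: "(c *\<^sub>R J_mat + B) *v u = 0"
    and u1: "u \<bullet> vec 1 = 1" and w: "w \<noteq> 0" "w \<bullet> vec 1 = 0" "B *v w = 0"
    using psd_shift_if_spherical_conditions[OF sym \<open>spherical_conditions B\<close>] by blast
  have Mw: "(c *\<^sub>R J_mat + B) *v w = 0"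
    using w by (simp add: matrix_vector_mult_add_rdistrib scaleR_matrix_vector_assoc[symmetric]
        J_mat_vector_mult)
  obtain q :: "'v \<Rightarrow> real^'v" where Mq: "c *\<^sub>R J_mat + B = gram_matrix q"
    using psd_gram_factorization[OF psdM] .
  have "u \<noteq> w"
    using u1 w by auto
  obtain p :: "'v \<Rightarrow> 'a" where "gram_matrix p = gram_matrix q"
  proof (rule gram_matrix_lower_dimension)
    show "independent {u, w}"
      using u1 w by (intro independent_pair[of u "vec 1"]) simp_all
    show "gram_matrix q *v x = 0" if "x \<in> {u, w}" for x
      using that Mu Mw by (auto simp: Mq)
    show "CARD('v) \<le> DIM('a) + card {u, w}"
      using dim \<open>u \<noteq> w\<close> by simp
  qed
  then have "B = gram_matrix p + (- c) *\<^sub>R J_mat"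
    by (simp add: Mq[symmetric])
  with w show ?thesis
    by blast
qed

section \<open>Spherical two-distance sets\<close>

lemma Bbar_mat_entry:
  assumes "k > 1"
  shows "Bbar_mat E k $ i $ j = (if i = j then 1 / (k\<^sup>2 - 1) else if E i j then -1 else 0)"
proof -
  have "k\<^sup>2 > 1"
    using assms by (simp add: one_less_power)
  then show ?thesis
    by (simp add: Bbar_mat_def B_mat_def J_mat_def field_simps)
qed

lemma transpose_Bbar_mat:
  assumes "simple_graph E"
  shows "transpose (Bbar_mat E k) = Bbar_mat E k"
proof -
  have "B_mat E k $ i $ j = B_mat E k $ j $ i" for i j
    using assms unfolding simple_graph_def B_mat_def by (cases "E i j") auto
  then show ?thesis
    by (simp add: Bbar_mat_def J_mat_def transpose_def vec_eq_iff)
qed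

lemma inner_eq_iff_norm_dist:
  fixes q :: "'v \<Rightarrow> 'a::real_inner"
  shows "(\<forall>i j. q i \<bullet> q j = (if i = j then \<alpha> else \<beta> i j)) \<longleftrightarrow>
    (\<forall>i. (norm (q i))\<^sup>2 = \<alpha>) \<and> (\<forall>i j. i \<noteq> j \<longrightarrow> (dist (q i) (q j))\<^sup>2 = 2 * \<alpha> - 2 * \<beta> i j)"
proof -
  have polar: "(dist (q i) (q j))\<^sup>2 = (norm (q i))\<^sup>2 + (norm (q j))\<^sup>2 - 2 * (q i \<bullet> q j)" for i j
    by (simp add: dist_norm power2_norm_eq_inner inner_diff_left inner_diff_right inner_commute)
  show ?thesis
  proof
    assume "\<forall>i j. q i \<bullet> q j = (if i = j then \<alpha> else \<beta> i j)"
    then show "(\<forall>i. (norm (q i))\<^sup>2 = \<alpha>) \<and> (\<forall>i j. i \<noteq> j \<longrightarrow> (dist (q i) (q j))\<^sup>2 = 2 * \<alpha> - 2 * \<beta> i j)"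
      by (simp add: polar power2_norm_eq_inner)
  next
    assume H: "(\<forall>i. (norm (q i))\<^sup>2 = \<alpha>) \<and> (\<forall>i j. i \<noteq> j \<longrightarrow> (dist (q i) (q j))\<^sup>2 = 2 * \<alpha> - 2 * \<beta> i j)"
    have "q i \<bullet> q j = (if i = j then \<alpha> else \<beta> i j)" for i j
      using H polar[of i j] by (cases "i = j") (simp_all add: power2_norm_eq_inner)
    then show "\<forall>i j. q i \<bullet> q j = (if i = j then \<alpha> else \<beta> i j)"
      by blast
  qed
qed

lemma Bbar_mat_eq_gram_iff:
  fixes q :: "'v::finite \<Rightarrow> 'a::real_inner"
  assumes "k > 1"
  shows "Bbar_mat E k = gram_matrix q + \<rho> *\<^sub>R J_mat \<longleftrightarrow>
    (\<forall>i. (norm (q i))\<^sup>2 = 1 / (k\<^sup>2 - 1) - \<rho>) \<and>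
    (\<forall>i j. i \<noteq> j \<longrightarrow> dist (q i) (q j) = (if E i j then k else 1) * sqrt (2 / (k\<^sup>2 - 1)))"
    (is "_ \<longleftrightarrow> ?norms \<and> ?dists")
proof -
  define \<alpha> where "\<alpha> = 1 / (k\<^sup>2 - 1) - \<rho>"
  define \<beta> where "\<beta> i j = (if E i j then -1 else 0) - \<rho>" for i j
  have "k\<^sup>2 > 1"
    using assms by (simp add: one_less_power)
  have dist_iff: "dist (q i) (q j) = (if E i j then k else 1) * sqrt (2 / (k\<^sup>2 - 1)) \<longleftrightarrow>
      (dist (q i) (q j))\<^sup>2 = 2 * \<alpha> - 2 * \<beta> i j" for i j
  proof -
    have "0 \<le> (if E i j then k else 1) * sqrt (2 / (k\<^sup>2 - 1))"
      using assms \<open>k\<^sup>2 > 1\<close> by simp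
    moreover have "((if E i j then k else 1) * sqrt (2 / (k\<^sup>2 - 1)))\<^sup>2 = 2 * \<alpha> - 2 * \<beta> i j"
      using \<open>k\<^sup>2 > 1\<close> by (simp add: \<alpha>_def \<beta>_def power_mult_distrib field_simps)
    ultimately show ?thesis
      using power2_eq_iff_nonneg[OF zero_le_dist] by metis
  qed
  have "Bbar_mat E k = gram_matrix q + \<rho> *\<^sub>R J_mat \<longleftrightarrow>
      (\<forall>i j. Bbar_mat E k $ i $ j = q i \<bullet> q j + \<rho>)"
    by (simp add: vec_eq_iff gram_matrix_def J_mat_def)
  also have "\<dots> \<longleftrightarrow> (\<forall>i j. q i \<bullet> q j = (if i = j then \<alpha> else \<beta> i j))"
    by (intro iff_allI) (auto simp: Bbar_mat_entry[OF assms] \<alpha>_def \<beta>_def)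
  also have "\<dots> \<longleftrightarrow> ?norms \<and> ?dists"
    unfolding inner_eq_iff_norm_dist dist_iff by (simp add: \<alpha>_def)
  finally show ?thesis .
qed

lemma edge_and_non_edge_if_Bbar_mat_kernel:
  assumes "k > 1" and Bw: "Bbar_mat E k *v w = 0" and "w \<noteq> 0" "w \<bullet> vec 1 = 0"
  shows "\<exists>x y. E x y" and "\<exists>x y. x \<noteq> y \<and> \<not> E x y"
proof -
  define d where "d = k\<^sup>2 - 1"
  have "d > 0"
    using assms(1) by (simp add: d_def one_less_power)
  show "\<exists>x y. E x y"
  proof (rule ccontr)
    assume "\<not> (\<exists>x y. E x y)"
    then have "Bbar_mat E k = (1 / d) *\<^sub>R mat 1"
      by (simp add: vec_eq_iff Bbar_mat_entry[OF assms(1)] mat_def d_def)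
    then have "(1 / d) *\<^sub>R w = 0"
      using Bw by (simp add: scaleR_matrix_vector_assoc[symmetric])
    with \<open>d > 0\<close> \<open>w \<noteq> 0\<close> show False
      by simp
  qed
  show "\<exists>x y. x \<noteq> y \<and> \<not> E x y"
  proof (rule ccontr)
    assume "\<not> (\<exists>x y. x \<noteq> y \<and> \<not> E x y)"
    then have "Bbar_mat E k = (1 / d + 1) *\<^sub>R mat 1 - J_mat"
      by (auto simp: vec_eq_iff Bbar_mat_entry[OF assms(1)] mat_def J_mat_def d_def)
    then have "(1 / d + 1) *\<^sub>R w = 0"
      using Bw \<open>w \<bullet> vec 1 = 0\<close>
      by (simp add: matrix_vector_mult_diff_rdistrib scaleR_matrix_vector_assoc[symmetric]
          J_mat_vector_mult)
    moreover have "1 / d + 1 > 0"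
      using \<open>d > 0\<close> by (simp add: add_pos_pos)
    ultimately show False
      using \<open>w \<noteq> 0\<close> by simp
  qed
qed

lemma spherical_representationD:
  assumes "spherical_representation E k p" "k > 1"
  obtains a c r where "a > 0"
    and "\<And>x y. x \<noteq> y \<Longrightarrow> dist (p x) (p y) = (if E x y then k * a else a)"
    and "\<And>x. dist (p x) c = r" and "\<exists>x y. E x y" and "\<exists>x y. x \<noteq> y \<and> \<not> E x y"
proof -
  obtain a1 a2 c r
    where dists: "{dist (p x) (p y) | x y. x \<noteq> y} = {a1, a2}" and "a1 > a2" "a1 / a2 = k"
      and edge_iff: "\<And>x y. x \<noteq> y \<Longrightarrow> E x y \<longleftrightarrow> dist (p x) (p y) = a1"
      and sphere: "\<And>x. dist (p x) c = r"
    using assms(1) unfolding spherical_representation_def by blast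
  have "a1 \<in> {dist (p x) (p y) | x y. x \<noteq> y}" "a2 \<in> {dist (p x) (p y) | x y. x \<noteq> y}"
    using dists by simp_all
  then obtain x0 y0 x1 y1 where "x0 \<noteq> y0" "dist (p x0) (p y0) = a1"
    and "x1 \<noteq> y1" "dist (p x1) (p y1) = a2"
    by blast
  have "a2 \<noteq> 0" \<comment> \<open>as \<open>a1 / 0 = 0 \<noteq> k\<close>\<close>
    using \<open>a1 / a2 = k\<close> assms(2) by auto
  then have "a2 > 0"
    using \<open>dist (p x1) (p y1) = a2\<close> zero_le_dist[of "p x1" "p y1"] by linarith
  have "a1 = k * a2"
    using \<open>a1 / a2 = k\<close> \<open>a2 \<noteq> 0\<close> by (simp add: field_simps)
  have "dist (p x) (p y) = (if E x y then k * a2 else a2)" if "x \<noteq> y" for x y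
  proof -
    have "dist (p x) (p y) \<in> {a1, a2}"
      using dists that by blast
    then show ?thesis
      using edge_iff[OF that] \<open>a1 = k * a2\<close> by auto
  qed
  moreover have "E x0 y0" "\<not> E x1 y1"
    using edge_iff \<open>x0 \<noteq> y0\<close> \<open>dist (p x0) (p y0) = a1\<close> \<open>x1 \<noteq> y1\<close>
      \<open>dist (p x1) (p y1) = a2\<close> \<open>a1 > a2\<close> by auto
  ultimately show thesis
    using that \<open>a2 > 0\<close> sphere \<open>x1 \<noteq> y1\<close> by blast
qed

lemma spherical_representationI:
  assumes "simple_graph E" "k > 1" "a > 0" "E x0 y0" "x1 \<noteq> y1" "\<not> E x1 y1"
    and dist_p: "\<And>x y. x \<noteq> y \<Longrightarrow> dist (p x) (p y) = (if E x y then k * a else a)"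
    and sphere: "\<And>x. dist (p x) c = r"
  shows "spherical_representation E k p"
proof -
  have "x0 \<noteq> y0"
    using \<open>E x0 y0\<close> assms(1) by (auto simp: simple_graph_def)
  have "k * a > a"
    using assms(2,3) by simp
  have "inj p"
  proof (rule injI)
    fix x y assume "p x = p y"
    then show "x = y"
      using dist_p[of x y] \<open>a > 0\<close> \<open>k * a > a\<close> by (cases "x = y") (auto split: if_splits)
  qed
  moreover have "{dist (p x) (p y) | x y. x \<noteq> y} = {k * a, a}"
  proof
    show "{dist (p x) (p y) | x y. x \<noteq> y} \<subseteq> {k * a, a}"
      using dist_p by auto
    have "k * a = dist (p x0) (p y0)" "a = dist (p x1) (p y1)"
      using dist_p \<open>x0 \<noteq> y0\<close> \<open>E x0 y0\<close> \<open>x1 \<noteq> y1\<close> \<open>\<not> E x1 y1\<close> by simp_all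
    then show "{k * a, a} \<subseteq> {dist (p x) (p y) | x y. x \<noteq> y}"
      using \<open>x0 \<noteq> y0\<close> \<open>x1 \<noteq> y1\<close> by blast
  qed
  moreover have "E x y \<longleftrightarrow> dist (p x) (p y) = k * a" if "x \<noteq> y" for x y
    using dist_p[OF that] \<open>k * a > a\<close> by auto
  moreover have "r > 0"
  proof -
    have "dist (p x1) (p y1) \<le> dist (p x1) c + dist (p y1) c"
      by (rule dist_triangle2)
    then show ?thesis
      using sphere dist_p[OF \<open>x1 \<noteq> y1\<close>] \<open>\<not> E x1 y1\<close> \<open>a > 0\<close> by auto
  qed
  moreover have "k * a / a = k"
    using \<open>a > 0\<close> by simp
  ultimately show ?thesis
    unfolding spherical_representation_def using \<open>k * a > a\<close> sphere by blast
qed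

lemma gram_plus_J_if_spherical_representation:
  fixes p :: "'v::finite \<Rightarrow> real^'n::finite"
  assumes "spherical_representation E k p" "k > 1"
  obtains q :: "'v \<Rightarrow> real^'n" and \<rho> where "Bbar_mat E k = gram_matrix q + \<rho> *\<^sub>R J_mat"
proof -
  obtain a c r where "a > 0"
    and dist_p: "\<And>x y. x \<noteq> y \<Longrightarrow> dist (p x) (p y) = (if E x y then k * a else a)"
    and sphere: "\<And>x. dist (p x) c = r"
    by (rule spherical_representationD[OF assms]) blast
  \<comment> \<open>The diagonal entries \<open>1 / (k\<^sup>2 - 1)\<close> of \<open>Bbar_mat E k\<close> dictate the shorter distance \<open>s\<close>.\<close>
  define s where "s = sqrt (2 / (k\<^sup>2 - 1))"
  define q where "q x = (s / a) *\<^sub>R (p x - c)" for x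
  have "s > 0"
    using assms(2) by (simp add: s_def one_less_power)
  have "(norm (q x))\<^sup>2 = 1 / (k\<^sup>2 - 1) - (1 / (k\<^sup>2 - 1) - (s / a * r)\<^sup>2)" for x
    using sphere[of x] \<open>s > 0\<close> \<open>a > 0\<close> by (simp add: q_def dist_norm norm_minus_commute)
  moreover have "dist (q x) (q y) = (if E x y then k else 1) * s" if "x \<noteq> y" for x y
  proof -
    have "dist (q x) (q y) = s / a * dist (p x) (p y)"
      using \<open>s > 0\<close> \<open>a > 0\<close> by (simp add: q_def dist_norm flip: scaleR_diff_right)
    then show ?thesis
      using dist_p[OF that] \<open>a > 0\<close> by simp
  qed
  ultimately have "Bbar_mat E k = gram_matrix q + (1 / (k\<^sup>2 - 1) - (s / a * r)\<^sup>2) *\<^sub>R J_mat"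
    unfolding Bbar_mat_eq_gram_iff[OF assms(2)] s_def by blast
  then show thesis
    by (rule that)
qed

lemma spherical_representation_if_gram_plus_J:
  assumes "simple_graph E" "k > 1" "E x0 y0" "x1 \<noteq> y1" "\<not> E x1 y1"
    and "Bbar_mat E k = gram_matrix q + \<rho> *\<^sub>R J_mat"
  shows "spherical_representation E k q"
proof -
  define s where "s = sqrt (2 / (k\<^sup>2 - 1))"
  have "s > 0"
    using assms(2) by (simp add: s_def one_less_power)
  have norms: "\<And>x. (norm (q x))\<^sup>2 = 1 / (k\<^sup>2 - 1) - \<rho>"
    and dists: "\<And>x y. x \<noteq> y \<Longrightarrow> dist (q x) (q y) = (if E x y then k else 1) * s"
    using assms(6) unfolding Bbar_mat_eq_gram_iff[OF assms(2)] s_def by blast+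
  show ?thesis
  proof (rule spherical_representationI[OF assms(1,2) \<open>s > 0\<close> assms(3-5)])
    show "dist (q x) (q y) = (if E x y then k * s else s)" if "x \<noteq> y" for x y
      using dists[OF that] by simp
    show "dist (q x) 0 = sqrt (1 / (k\<^sup>2 - 1) - \<rho>)" for x
      using norms[of x] by (simp add: real_sqrt_unique)
  qed
qed

lemma spherical_representation_iff_gram:
  assumes "simple_graph E" "k > 1"
  shows "(\<exists>p :: 'v::finite \<Rightarrow> real^'n::finite. spherical_representation E k p) \<longleftrightarrow>
    (\<exists>x y. E x y) \<and> (\<exists>x y. x \<noteq> y \<and> \<not> E x y) \<and>
    (\<exists>(q :: 'v \<Rightarrow> real^'n) \<rho>. Bbar_mat E k = gram_matrix q + \<rho> *\<^sub>R J_mat)"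
proof
  assume "\<exists>p :: 'v \<Rightarrow> real^'n. spherical_representation E k p"
  then obtain p :: "'v \<Rightarrow> real^'n" where p: "spherical_representation E k p"
    by blast
  obtain a c r where "a > 0" "\<And>x y. x \<noteq> y \<Longrightarrow> dist (p x) (p y) = (if E x y then k * a else a)"
    and "\<And>x. dist (p x) c = r" and "\<exists>x y. E x y" "\<exists>x y. x \<noteq> y \<and> \<not> E x y"
    by (rule spherical_representationD[OF p assms(2)]) blast
  moreover obtain q :: "'v \<Rightarrow> real^'n" and \<rho> where "Bbar_mat E k = gram_matrix q + \<rho> *\<^sub>R J_mat"
    by (rule gram_plus_J_if_spherical_representation[OF p assms(2)])
  ultimately show "(\<exists>x y. E x y) \<and> (\<exists>x y. x \<noteq> y \<and> \<not> E x y) \<and>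
    (\<exists>(q :: 'v \<Rightarrow> real^'n) \<rho>. Bbar_mat E k = gram_matrix q + \<rho> *\<^sub>R J_mat)"
    by blast
next
  assume "(\<exists>x y. E x y) \<and> (\<exists>x y. x \<noteq> y \<and> \<not> E x y) \<and>
    (\<exists>(q :: 'v \<Rightarrow> real^'n) \<rho>. Bbar_mat E k = gram_matrix q + \<rho> *\<^sub>R J_mat)"
  then obtain x0 y0 x1 y1 and q :: "'v \<Rightarrow> real^'n" and \<rho>
    where "E x0 y0" "x1 \<noteq> y1" "\<not> E x1 y1" "Bbar_mat E k = gram_matrix q + \<rho> *\<^sub>R J_mat"
    by blast
  then show "\<exists>p :: 'v \<Rightarrow> real^'n. spherical_representation E k p"
    using spherical_representation_if_gram_plus_J[OF assms] by blast
qed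

theorem proposition4p1:
  fixes E :: "'v::finite \<Rightarrow> 'v \<Rightarrow> bool" and k :: real
  assumes "simple_graph E"
    and "CARD('v) = CARD('n::finite) + 2"
    and "k > 1"
  shows "(\<exists>p :: 'v \<Rightarrow> real^'n. spherical_representation E k p) \<longleftrightarrow>
     ((\<forall>w :: real^'v. w \<bullet> vec 1 = 0 \<longrightarrow> 0 \<le> w \<bullet> (Bbar_mat E k *v w)) \<and>
      (\<exists>(w :: real^'v) \<gamma>. w \<noteq> 0 \<and> w \<bullet> vec 1 = 0 \<and> Bbar_mat E k *v w = \<gamma> *\<^sub>R vec 1) \<and>
      det (Bbar_mat E k) = 0 \<and>
      (\<exists>r0. \<forall>r \<ge> r0. psd (r *\<^sub>R J_mat + Bbar_mat E k)))"
proof -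
  have dim: "DIM(real^'n) + 2 = CARD('v)"
    using assms(2) by simp
  show ?thesis
    unfolding spherical_representation_iff_gram[OF assms(1,3)] spherical_conditions_def[symmetric]
  proof (rule iffI, goal_cases)
    case 1
    then obtain q :: "'v \<Rightarrow> real^'n" and \<rho> where "Bbar_mat E k = gram_matrix q + \<rho> *\<^sub>R J_mat"
      by blast
    then show ?case
      by (rule spherical_conditions_if_gram_plus_J) (use dim in simp)
  next
    case 2
    have "(\<exists>w. w \<noteq> 0 \<and> w \<bullet> vec 1 = 0 \<and> Bbar_mat E k *v w = 0) \<and>
        (\<exists>(q :: 'v \<Rightarrow> real^'n) \<rho>. Bbar_mat E k = gram_matrix q + \<rho> *\<^sub>R J_mat)"
      by (rule gram_plus_J_if_spherical_conditions[OF transpose_Bbar_mat[OF assms(1)] _ 2])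
        (use dim in simp)
    then show ?case
      using edge_and_non_edge_if_Bbar_mat_kernel[OF assms(3)] by blast
  qed
qed

end
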